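(* Let $1\le p\le\infty$ and $m\in\mathbb N_0$. Let $\varphi\in C_0^k(\mathbb R)$ with $\operatorname{supp}\varphi\subset[0,1]$, $\varphi>0$ on $(0,1)$ and $k>m+1$, and assume that $\varphi^{(k)}$ has only finitely many zeros in $[0,1]$. Then $$\frac{|\varphi^{(r)}(t)\,\varphi^{(\alpha)}(t)|}{|\varphi(t)|^{1/p}}\in L_\infty([0,1])$$ for all $r,\alpha\in\mathbb N_0$ with $r+\alpha\le m$.
   Context: $C_0^k(\mathbb R)$: compactly supported functions whose derivatives up to order $k$ are uniformly continuous. *)

theory Defs
  imports "HOL-Analysis.Analysis"
begin

definition nderiv :: "nat \<Rightarrow> (real \<Rightarrow> real) \<Rightarrow> real \<Rightarrow> real" where
  "nderiv j f = (deriv ^^ j) f"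

definition supp :: "(real \<Rightarrow> real) \<Rightarrow> real set" where
  "supp f = closure {x. f x \<noteq> 0}"

definition C0k :: "nat \<Rightarrow> (real \<Rightarrow> real) set" where
  "C0k k = {f. compact (supp f)
      \<and> (\<forall>j<k. \<forall>x. nderiv j f differentiable (at x))
      \<and> (\<forall>j\<le>k. uniformly_continuous_on UNIV (nderiv j f))}"

definition Linf_on :: "real set \<Rightarrow> (real \<Rightarrow> real) \<Rightarrow> bool" where
  "Linf_on S g \<longleftrightarrow> g \<in> borel_measurable (restrict_space lborel S)
      \<and> (\<exists>C. AE t in lborel. t \<in> S \<longrightarrow> \<bar>g t\<bar> \<le> C)"

end

theory Submission
  imports Defs
begin

text \<open>Write \<open>\<phi>\<^sub>j\<close> for the \<open>j\<close>-th derivative. At 0 all \<open>\<phi>\<^sub>j\<close> with \<open>j < k\<close>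
  vanish, while \<open>\<phi>\<^sub>k\<close> has no zero on some interval \<open>(0, \<delta>)\<close>. As \<open>\<phi> > 0\<close> there,
  \<open>\<phi>\<^sub>k > 0\<close> by the intermediate value theorem, and integrating up from 0 every \<open>\<phi>\<^sub>j\<close>
  is positive on \<open>(0, \<delta>)\<close>. Monotonicity of \<open>s \<mapsto> 2 \<phi>\<^sub>i(s) \<phi>\<^sub>i\<^sub>+\<^sub>2(t) - \<phi>\<^sub>i\<^sub>+\<^sub>1(s)\<^sup>2\<close>
  on \<open>[0, t]\<close> gives \<open>\<phi>\<^sub>i\<^sub>+\<^sub>1\<^sup>2 \<le> 2 \<phi>\<^sub>i \<phi>\<^sub>i\<^sub>+\<^sub>2\<close>, and iterating this yields
  \<open>\<phi>\<^sub>r \<phi>\<^sub>\<alpha> \<le> 2\<^sup>r\<^sup>\<alpha> \<phi> \<phi>\<^sub>r\<^sub>+\<^sub>\<alpha>\<close>. Hence \<open>\<phi>\<^sub>r \<phi>\<^sub>\<alpha> = O(\<phi>)\<close> near 0, near 1 by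
  reflection, and trivially in between, where \<open>\<phi>\<close> is bounded below; since \<open>1/p \<le> 1\<close>, it is
  also \<open>O(\<phi>\<^sup>1\<^sup>/\<^sup>p)\<close>.\<close>

lemma continuous_on_connected_pos:
  fixes f :: "'a::topological_space \<Rightarrow> real"
  assumes "continuous_on S f" "connected S" "\<And>x. x \<in> S \<Longrightarrow> f x \<noteq> 0"
    and "x \<in> S" "f x > 0" "y \<in> S"
  shows "f y > 0"
proof (rule ccontr)
  assume "\<not> f y > 0"
  then have "f y < 0" using assms(3,6) by force
  moreover have "connected (f ` S)" using assms(1,2) by (rule connected_continuous_image)
  ultimately have "0 \<in> f ` S"
    using assms(4,5,6) unfolding connected_iff_interval by (meson imageI less_imp_le)
  then show False using assms(3) by auto
qed

lemma sq_deriv_le_twice_mul: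
  fixes f f' f'' :: "real \<Rightarrow> real"
  assumes f: "\<And>s. (f has_real_derivative f' s) (at s)"
    and f': "\<And>s. (f' has_real_derivative f'' s) (at s)"
    and "f 0 = 0" "f' 0 = 0"
    and f'_nonneg: "\<And>s. 0 \<le> s \<Longrightarrow> s \<le> t \<Longrightarrow> f' s \<ge> 0"
    and f''_mono: "mono_on {0..t} f''"
    and "0 \<le> t"
  shows "f' t ^ 2 \<le> 2 * f t * f'' t"
proof -
  define H where "H s = 2 * f s * f'' t - f' s ^ 2" for s
  have H': "(H has_real_derivative 2 * f' s * (f'' t - f'' s)) (at s)" for s
    unfolding H_def
    by (rule derivative_eq_intros f f' refl | simp add: algebra_simps)+
  have "H 0 \<le> H t"
  proof (rule DERIV_nonneg_imp_increasing_open[OF \<open>0 \<le> t\<close>])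
    show "\<exists>y. (H has_real_derivative y) (at s) \<and> y \<ge> 0" if "0 < s" "s < t" for s
      using H' f'_nonneg[of s] mono_onD[OF f''_mono, of s t] that by force
    show "continuous_on {0..t} H"
      using H' by (meson DERIV_isCont continuous_at_imp_continuous_on)
  qed
  then show ?thesis using assms(3,4) by (simp add: H_def)
qed

lemma shifted_product_le:
  fixes a :: "nat \<Rightarrow> real"
  assumes pos: "\<And>j. j \<le> n \<Longrightarrow> a j > 0"
    and sq: "\<And>i. i + 2 \<le> n \<Longrightarrow> a (i + 1) ^ 2 \<le> 2 * a i * a (i + 2)"
  shows "i + d + 1 \<le> n \<Longrightarrow> a (i + 1) * a (i + d) \<le> 2 ^ d * a i * a (i + d + 1)"
proof (induction d)
  case 0
  then show ?case by simp
next
  case (Suc d)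
  have IH: "a (i + 1) * a (i + d) \<le> 2 ^ d * a i * a (i + d + 1)"
    using Suc by simp
  have pos': "a i > 0" "a (i + 1) > 0" "a (i + d) > 0" "a (i + d + 1) > 0"
    using pos Suc.prems by auto
  have "a (i + 1) * a (i + d + 1) * a (i + d) \<le> 2 ^ d * a i * a (i + d + 1) ^ 2"
    using mult_right_mono[OF IH, of "a (i + d + 1)"] pos' by (simp add: power2_eq_square mult_ac)
  also have "\<dots> \<le> 2 ^ d * a i * (2 * a (i + d) * a (i + d + 2))"
    using sq[of "i + d"] Suc.prems pos' by (intro mult_left_mono) (auto simp: add.assoc)
  finally show ?case
    using pos' by (simp add: mult_ac add.assoc)
qed

lemma product_le_pow2_mul:
  fixes a :: "nat \<Rightarrow> real"
  assumes pos: "\<And>j. j \<le> n \<Longrightarrow> a j > 0"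
    and sq: "\<And>i. i + 2 \<le> n \<Longrightarrow> a (i + 1) ^ 2 \<le> 2 * a i * a (i + 2)"
  shows "r + s \<le> n \<Longrightarrow> a r * a s \<le> 2 ^ (r * s) * a 0 * a (r + s)"
proof (induction r)
  case 0
  then show ?case by simp
next
  case (Suc r)
  have IH: "a r * a s \<le> 2 ^ (r * s) * a 0 * a (r + s)"
    using Suc by simp
  have shift: "a (r + 1) * a (r + s) \<le> 2 ^ s * a r * a (r + s + 1)"
    using shifted_product_le[OF pos sq] Suc.prems by simp
  have pos': "a 0 > 0" "a r > 0" "a (r + 1) > 0"
    using pos Suc.prems by auto
  have "a (r + 1) * a s * a r \<le> 2 ^ (r * s) * a 0 * (a (r + 1) * a (r + s))"
    using mult_left_mono[OF IH, of "a (r + 1)"] pos' by (simp add: mult_ac)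
  also have "\<dots> \<le> 2 ^ (r * s) * a 0 * (2 ^ s * a r * a (r + s + 1))"
    using shift pos' by (intro mult_left_mono) auto
  finally show ?case
    using pos' by (simp add: power_add mult_ac)
qed

locale flat_derivative_chain =
  fixes F :: "nat \<Rightarrow> real \<Rightarrow> real" and k :: nat
  assumes has_real_derivative: "j < k \<Longrightarrow> (F j has_real_derivative F (Suc j) x) (at x)"
    and flat_at_0: "j < k \<Longrightarrow> F j 0 = 0"
begin

lemma continuous_below_top: "j < k \<Longrightarrow> continuous_on S (F j)"
  by (meson has_real_derivative DERIV_isCont continuous_at_imp_continuous_on)

lemma pos_if_top_pos:
  assumes top: "\<And>x. 0 < x \<Longrightarrow> x < \<delta> \<Longrightarrow> F k x > 0"
    and "j \<le> k" "0 < x" "x < \<delta>"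
  shows "F j x > 0"
  using \<open>j \<le> k\<close> \<open>0 < x\<close> \<open>x < \<delta>\<close>
proof (induction j arbitrary: x rule: inc_induct)
  case base
  then show ?case by (rule top)
next
  case (step j)
  have "F j 0 < F j x"
  proof (rule DERIV_pos_imp_increasing_open[OF \<open>0 < x\<close>])
    show "\<exists>y. (F j has_real_derivative y) (at s) \<and> y > 0" if "0 < s" "s < x" for s
      using has_real_derivative[OF step.hyps(2)] step.IH[of s] that step.prems by auto
    show "continuous_on {0..x} (F j)"
      using continuous_below_top step.hyps(2) by blast
  qed
  then show ?case using flat_at_0[OF step.hyps(2)] by simp
qed

lemma top_pos:
  assumes cont: "continuous_on {0<..<\<delta>} (F k)"
    and nonzero: "\<And>x. 0 < x \<Longrightarrow> x < \<delta> \<Longrightarrow> F k x \<noteq> 0"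
    and base_pos: "\<And>x. 0 < x \<Longrightarrow> x < \<delta> \<Longrightarrow> F 0 x > 0"
    and "0 < x" "x < \<delta>"
  shows "F k x > 0"
proof (rule ccontr)
  assume "\<not> F k x > 0"
  then have "- F k x > 0" using nonzero \<open>0 < x\<close> \<open>x < \<delta>\<close> by force
  then have neg_top: "- F k y > 0" if "0 < y" "y < \<delta>" for y
    using continuous_on_connected_pos[of "{0<..<\<delta>}" "\<lambda>y. - F k y" x y] cont nonzero that
      \<open>0 < x\<close> \<open>x < \<delta>\<close> by (auto intro: continuous_intros)
  interpret neg: flat_derivative_chain "\<lambda>j x. - F j x" k
    by unfold_locales (auto intro: has_real_derivative flat_at_0 derivative_intros)
  have "- F 0 x > 0"
    using neg.pos_if_top_pos[of \<delta> 0 x] neg_top \<open>0 < x\<close> \<open>x < \<delta>\<close> by auto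
  then show False using base_pos \<open>0 < x\<close> \<open>x < \<delta>\<close> by force
qed

lemma sq_le_twice_mul:
  assumes pos: "\<And>j x. j \<le> k \<Longrightarrow> 0 < x \<Longrightarrow> x < \<delta> \<Longrightarrow> F j x > 0"
    and "i + 3 \<le> k" "0 < t" "t < \<delta>"
  shows "F (i + 1) t ^ 2 \<le> 2 * F i t * F (i + 2) t"
proof (rule sq_deriv_le_twice_mul[where f = "F i" and f' = "F (i + 1)" and f'' = "F (i + 2)"])
  show "(F i has_real_derivative F (i + 1) s) (at s)"
    and "(F (i + 1) has_real_derivative F (i + 2) s) (at s)" for s
    using has_real_derivative[of i] has_real_derivative[of "i + 1"] \<open>i + 3 \<le> k\<close> by auto
  show "F i 0 = 0" "F (i + 1) 0 = 0"
    using flat_at_0 \<open>i + 3 \<le> k\<close> by auto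
  show "F (i + 1) s \<ge> 0" if "0 \<le> s" "s \<le> t" for s
    using pos[of "i + 1" s] flat_at_0[of "i + 1"] that \<open>i + 3 \<le> k\<close> \<open>t < \<delta>\<close>
    by (cases "s = 0") auto
  show "mono_on {0..t} (F (i + 2))"
  proof (rule mono_onI)
    fix s s' assume s: "s \<in> {0..t}" "s' \<in> {0..t}" "s \<le> s'"
    show "F (i + 2) s \<le> F (i + 2) s'"
    proof (rule DERIV_nonneg_imp_increasing_open[OF \<open>s \<le> s'\<close>])
      show "\<exists>y. (F (i + 2) has_real_derivative y) (at u) \<and> y \<ge> 0" if "s < u" "u < s'" for u
        using has_real_derivative[of "i + 2"] pos[of "i + 3" u] that s \<open>i + 3 \<le> k\<close> \<open>t < \<delta>\<close>
        by (fastforce simp: numeral_3_eq_3 intro: less_imp_le)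
      show "continuous_on {s..s'} (F (i + 2))"
        using continuous_below_top \<open>i + 3 \<le> k\<close> by simp
    qed
  qed
qed (use \<open>0 < t\<close> in auto)

lemma abs_product_le:
  assumes pos: "\<And>j x. j \<le> k \<Longrightarrow> 0 < x \<Longrightarrow> x < \<delta> \<Longrightarrow> F j x > 0"
    and "r + s < k" "0 < t" "t < \<delta>"
  shows "\<bar>F r t * F s t\<bar> \<le> 2 ^ (r * s) * F 0 t * \<bar>F (r + s) t\<bar>"
proof -
  have "F r t * F s t \<le> 2 ^ (r * s) * F 0 t * F (r + s) t"
  proof (rule product_le_pow2_mul[where a = "\<lambda>j. F j t" and n = "k - 1"])
    show "F (i + 1) t ^ 2 \<le> 2 * F i t * F (i + 2) t" if "i + 2 \<le> k - 1" for i
      using sq_le_twice_mul[OF pos] that \<open>r + s < k\<close> \<open>0 < t\<close> \<open>t < \<delta>\<close> by simp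
  qed (use pos \<open>r + s < k\<close> \<open>0 < t\<close> \<open>t < \<delta>\<close> in auto)
  moreover have "F r t > 0" "F s t > 0" "F (r + s) t > 0"
    using pos \<open>r + s < k\<close> \<open>0 < t\<close> \<open>t < \<delta>\<close> by auto
  ultimately show ?thesis by simp
qed

lemma abs_product_le_const_mul_base:
  assumes cont: "continuous_on {0<..<\<delta>} (F k)"
    and nonzero: "\<And>x. 0 < x \<Longrightarrow> x < \<delta> \<Longrightarrow> F k x \<noteq> 0"
    and base_pos: "\<And>x. 0 < x \<Longrightarrow> x < \<delta> \<Longrightarrow> F 0 x > 0"
    and "r + s < k"
  shows "\<exists>C. \<forall>t. 0 < t \<longrightarrow> t < \<delta> \<longrightarrow> \<bar>F r t * F s t\<bar> \<le> C * F 0 t"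
proof -
  have pos: "F j x > 0" if "j \<le> k" "0 < x" "x < \<delta>" for j x
    using pos_if_top_pos top_pos[OF cont nonzero base_pos] that by blast
  have "compact (F (r + s) ` {0..\<delta>})"
    using continuous_below_top \<open>r + s < k\<close> by (intro compact_continuous_image) auto
  then obtain B where B: "\<And>t. t \<in> {0..\<delta>} \<Longrightarrow> \<bar>F (r + s) t\<bar> \<le> B"
    by (fastforce dest: compact_imp_bounded simp: bounded_iff)
  have "\<bar>F r t * F s t\<bar> \<le> (2 ^ (r * s) * B) * F 0 t" if "0 < t" "t < \<delta>" for t
  proof -
    have "\<bar>F r t * F s t\<bar> \<le> 2 ^ (r * s) * F 0 t * \<bar>F (r + s) t\<bar>"
      using abs_product_le[OF pos] \<open>r + s < k\<close> that by blast
    also have "\<dots> \<le> 2 ^ (r * s) * F 0 t * B"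
      using B[of t] base_pos[of t] that by (intro mult_left_mono) auto
    finally show ?thesis by (simp add: mult_ac)
  qed
  then show ?thesis by blast
qed

end

lemma nderiv_0 [simp]: "nderiv 0 f = f"
  by (simp add: nderiv_def)

lemma nderiv_Suc: "nderiv (Suc j) f = deriv (nderiv j f)"
  by (simp add: nderiv_def)

lemma nderiv_eq_0_outside_supp: "x \<notin> supp f \<Longrightarrow> nderiv j f x = 0"
proof (induction j arbitrary: x)
  case 0
  then show ?case
    unfolding supp_def using closure_subset[of "{y. f y \<noteq> 0}"] by auto
next
  case (Suc j)
  have "(nderiv j f has_real_derivative 0) (at x)"
  proof (rule has_field_derivative_transform_within_open)
    show "((\<lambda>_. 0) has_real_derivative 0) (at x)" by simp
    show "open (- supp f)" unfolding supp_def by (intro open_Compl closed_closure)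
    show "x \<in> - supp f" "\<And>y. y \<in> - supp f \<Longrightarrow> 0 = nderiv j f y"
      using Suc by auto
  qed
  then show ?case by (simp add: nderiv_Suc DERIV_imp_deriv)
qed

lemma C0k_has_real_derivative:
  assumes "f \<in> C0k k" "j < k"
  shows "(nderiv j f has_real_derivative nderiv (Suc j) f x) (at x)"
proof -
  have "nderiv j f differentiable (at x)" using assms unfolding C0k_def by blast
  then show ?thesis by (simp add: nderiv_Suc DERIV_deriv_iff_real_differentiable)
qed

lemma C0k_continuous_on:
  assumes "f \<in> C0k k" "j \<le> k"
  shows "continuous_on S (nderiv j f)"
proof -
  have "uniformly_continuous_on UNIV (nderiv j f)" using assms unfolding C0k_def by blast
  then show ?thesis
    using continuous_on_subset uniformly_continuous_imp_continuous by blast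
qed

lemma C0k_nderiv_eq_0_closure_outside_supp:
  assumes "f \<in> C0k k" "j \<le> k" "x \<in> closure (- supp f)"
  shows "nderiv j f x = 0"
proof -
  have "closed {y \<in> UNIV. nderiv j f y = 0}"
    using C0k_continuous_on[OF assms(1,2)] by (intro continuous_closed_preimage_constant) auto
  then have "closure (- supp f) \<subseteq> {y \<in> UNIV. nderiv j f y = 0}"
    by (intro closure_minimal) (auto intro: nderiv_eq_0_outside_supp)
  then show ?thesis using assms(3) by auto
qed

lemma C0k_nderiv_eq_0_at_ends:
  fixes a b :: real
  assumes "f \<in> C0k k" "supp f \<subseteq> {a..b}" "j \<le> k"
  shows "nderiv j f a = 0" "nderiv j f b = 0"
proof -
  have "{..<a} \<union> {b<..} \<subseteq> - supp f" using assms(2) by auto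
  then have "closure ({..<a} \<union> {b<..}) \<subseteq> closure (- supp f)" by (rule closure_mono)
  then have "{..a} \<union> {b..} \<subseteq> closure (- supp f)" by (simp add: closure_Un)
  then show "nderiv j f a = 0" "nderiv j f b = 0"
    using C0k_nderiv_eq_0_closure_outside_supp[OF assms(1,3)] by auto
qed

lemma flat_derivative_chain_reflect:
  assumes "\<And>j x. j < k \<Longrightarrow> (F j has_real_derivative F (Suc j) x) (at x)"
    and "\<And>j. j < k \<Longrightarrow> F j c = 0"
  shows "flat_derivative_chain (\<lambda>j y. (-1) ^ j * F j (c - y)) k"
proof
  fix j x assume "j < k"
  have "((\<lambda>y. F j (c - y)) has_real_derivative F (Suc j) (c - x) * (-1)) (at x)"
    by (rule DERIV_chain2[OF assms(1)[OF \<open>j < k\<close>]]) (auto intro!: derivative_eq_intros)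
  then have "((\<lambda>y. (-1) ^ j * F j (c - y)) has_real_derivative (-1) ^ j * (F (Suc j) (c - x) * (-1))) (at x)"
    by (rule DERIV_cmult)
  then show "((\<lambda>y. (-1) ^ j * F j (c - y)) has_real_derivative (-1) ^ Suc j * F (Suc j) (c - x)) (at x)"
    by simp
qed (use assms(2) in simp)

lemma finite_avoids_near_ends:
  fixes Z :: "real set"
  assumes "finite Z"
  shows "\<exists>\<delta>>0. \<forall>x. 0 < x \<longrightarrow> x < \<delta> \<longrightarrow> a + x \<notin> Z \<and> b - x \<notin> Z"
proof -
  obtain \<delta>a where "\<delta>a > 0" and \<delta>a: "\<And>z. z \<in> Z \<Longrightarrow> z \<noteq> a \<Longrightarrow> \<delta>a \<le> dist a z"
    using finite_set_avoid[OF assms, of a] by blast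
  obtain \<delta>b where "\<delta>b > 0" and \<delta>b: "\<And>z. z \<in> Z \<Longrightarrow> z \<noteq> b \<Longrightarrow> \<delta>b \<le> dist b z"
    using finite_set_avoid[OF assms, of b] by blast
  have "a + x \<notin> Z \<and> b - x \<notin> Z" if "0 < x" "x < min \<delta>a \<delta>b" for x
    using \<delta>a[of "a + x"] \<delta>b[of "b - x"] that by (auto simp: dist_real_def)
  then show ?thesis
    using \<open>\<delta>a > 0\<close> \<open>\<delta>b > 0\<close> by (intro exI[of _ "min \<delta>a \<delta>b"]) auto
qed

lemma abs_le_const_mul_on_compact:
  fixes g h :: "real \<Rightarrow> real"
  assumes "compact K" "continuous_on K g" "continuous_on K h" "\<And>t. t \<in> K \<Longrightarrow> h t > 0"
  shows "\<exists>C. \<forall>t\<in>K. \<bar>g t\<bar> \<le> C * h t"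
proof (cases "K = {}")
  case False
  obtain t0 where t0: "t0 \<in> K" "\<And>t. t \<in> K \<Longrightarrow> h t0 \<le> h t"
    using continuous_attains_inf[OF assms(1) False assms(3)] by blast
  obtain B where B: "\<And>t. t \<in> K \<Longrightarrow> \<bar>g t\<bar> \<le> B"
    using compact_imp_bounded[OF compact_continuous_image[OF assms(2,1)]]
    by (auto simp: bounded_iff)
  have "\<bar>g t\<bar> \<le> B / h t0 * h t" if "t \<in> K" for t
  proof -
    have "B \<ge> 0" using B[OF that] by linarith
    have "\<bar>g t\<bar> \<le> B / h t0 * h t0" using B[OF that] assms(4)[OF t0(1)] by simp
    also have "\<dots> \<le> B / h t0 * h t"
      using t0 that \<open>B \<ge> 0\<close> assms(4)[OF t0(1)] by (intro mult_left_mono) auto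
    finally show ?thesis .
  qed
  then show ?thesis by blast
qed simp

lemma Linf_on_abs_div_abs_powr:
  fixes g h :: "real \<Rightarrow> real"
  assumes "compact S" "continuous_on UNIV g" "continuous_on UNIV h"
    and le: "\<And>t. t \<in> S \<Longrightarrow> h t \<noteq> 0 \<Longrightarrow> \<bar>g t\<bar> \<le> C * \<bar>h t\<bar>"
    and "0 \<le> s" "s \<le> 1"
  shows "Linf_on S (\<lambda>t. \<bar>g t\<bar> / \<bar>h t\<bar> powr s)"
  \<comment> \<open>No bound is needed where \<open>h\<close> vanishes: there \<open>0 powr s = 0\<close> and the quotient is \<open>x / 0 = 0\<close>.\<close>
  unfolding Linf_on_def
proof
  have "(\<lambda>t. \<bar>g t\<bar> / \<bar>h t\<bar> powr s) \<in> borel_measurable borel"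
    using assms(2,3) by (intro borel_measurable_divide borel_measurable_abs measurable_abs_powr
        borel_measurable_continuous_onI)
  then show "(\<lambda>t. \<bar>g t\<bar> / \<bar>h t\<bar> powr s) \<in> borel_measurable (restrict_space lborel S)"
    by (simp add: measurable_restrict_space1 measurable_lborel2)
  obtain B where B: "\<And>t. t \<in> S \<Longrightarrow> \<bar>g t\<bar> \<le> B"
    using compact_imp_bounded[OF compact_continuous_image[OF continuous_on_subset[OF assms(2)] assms(1)]]
    by (auto simp: bounded_iff)
  have bound: "\<bar>g t\<bar> / \<bar>h t\<bar> powr s \<le> max B C" if "t \<in> S" for t
  proof (cases "\<bar>h t\<bar> < 1")
    case True
    show ?thesis
    proof (cases "h t = 0")
      case False
      have "\<bar>h t\<bar> powr 1 \<le> \<bar>h t\<bar> powr s"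
        using True False \<open>s \<le> 1\<close> by (intro powr_mono') auto
      then have "\<bar>g t\<bar> / \<bar>h t\<bar> powr s \<le> \<bar>g t\<bar> / \<bar>h t\<bar>"
        using False by (intro divide_left_mono) auto
      also have "\<dots> \<le> C" using le[OF that False] False by (simp add: divide_le_eq)
      finally show ?thesis by simp
    qed (use B[OF that] in auto)
  next
    case False
    then have "1 \<le> \<bar>h t\<bar> powr s" using \<open>0 \<le> s\<close> by (intro ge_one_powr_ge_zero) auto
    then have "\<bar>g t\<bar> / \<bar>h t\<bar> powr s \<le> \<bar>g t\<bar>"
      by (simp add: divide_le_eq mult_le_cancel_left1)
    then show ?thesis using B[OF that] by simp
  qed
  show "\<exists>C. AE t in lborel. t \<in> S \<longrightarrow> \<bar>\<bar>g t\<bar> / \<bar>h t\<bar> powr s\<bar> \<le> C"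
  proof (intro exI[of _ "max B C"] AE_I2 impI)
    fix t assume "t \<in> S"
    then show "\<bar>\<bar>g t\<bar> / \<bar>h t\<bar> powr s\<bar> \<le> max B C"
      using bound[of t] by (simp add: abs_of_nonneg)
  qed
qed

lemma C0k_abs_product_le_const_mul_near_ends:
  fixes \<phi> :: "real \<Rightarrow> real"
  assumes \<phi>: "\<phi> \<in> C0k k" and supp: "supp \<phi> \<subseteq> {0..1}"
    and pos: "\<And>t. t \<in> {0<..<1} \<Longrightarrow> \<phi> t > 0"
    and zeros: "finite {t\<in>{0..1}. nderiv k \<phi> t = 0}" and "r + s < k"
  shows "\<exists>\<delta> C. 0 < \<delta> \<and> \<delta> \<le> 1 / 2 \<and> (\<forall>t. 0 < t \<and> t < \<delta> \<or> 1 - \<delta> < t \<and> t < 1 \<longrightarrow>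
            \<bar>nderiv r \<phi> t * nderiv s \<phi> t\<bar> \<le> C * \<phi> t)"
proof -
  define F where "F j = nderiv j \<phi>" for j
  define G where "G j y = (-1) ^ j * F j (1 - y)" for j y
  have der: "(F j has_real_derivative F (Suc j) x) (at x)" if "j < k" for j x
    using C0k_has_real_derivative[OF \<phi> that] by (simp add: F_def)
  have cont: "continuous_on S (F k)" for S
    using C0k_continuous_on[OF \<phi> order_refl] by (simp add: F_def)
  have vanish: "F j 0 = 0" "F j 1 = 0" if "j \<le> k" for j
    using C0k_nderiv_eq_0_at_ends[OF \<phi> supp that] by (simp_all add: F_def)
  interpret left: flat_derivative_chain F k
    by unfold_locales (use der vanish in auto)
  interpret right: flat_derivative_chain G k
    unfolding G_def by (rule flat_derivative_chain_reflect) (use der vanish in auto)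
  obtain \<delta>0 where "\<delta>0 > 0"
    and avoid: "\<And>x. 0 < x \<Longrightarrow> x < \<delta>0 \<Longrightarrow> 0 + x \<notin> {t\<in>{0..1}. F k t = 0} \<and> 1 - x \<notin> {t\<in>{0..1}. F k t = 0}"
    using finite_avoids_near_ends[of _ 0 1] zeros unfolding F_def by blast
  define \<delta> where "\<delta> = min \<delta>0 (1 / 2)"
  have "\<delta> > 0" "\<delta> \<le> 1 / 2" using \<open>\<delta>0 > 0\<close> by (auto simp: \<delta>_def)
  have nonzero: "F k x \<noteq> 0" "G k x \<noteq> 0" if "0 < x" "x < \<delta>" for x
    using avoid[of x] that by (auto simp: \<delta>_def G_def)
  have base_pos: "F 0 t > 0" "G 0 t > 0" if "0 < t" "t < \<delta>" for t
    using pos[of t] pos[of "1 - t"] that \<open>\<delta> \<le> 1 / 2\<close> by (auto simp: F_def G_def)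
  obtain C1 where C1: "\<And>t. 0 < t \<Longrightarrow> t < \<delta> \<Longrightarrow> \<bar>F r t * F s t\<bar> \<le> C1 * F 0 t"
    using left.abs_product_le_const_mul_base[OF cont nonzero(1) base_pos(1) \<open>r + s < k\<close>] by blast
  have "continuous_on {0<..<\<delta>} (G k)"
    unfolding G_def by (intro continuous_intros continuous_on_compose2[OF cont]) auto
  then obtain C2 where C2: "\<And>y. 0 < y \<Longrightarrow> y < \<delta> \<Longrightarrow> \<bar>G r y * G s y\<bar> \<le> C2 * G 0 y"
    using right.abs_product_le_const_mul_base[OF _ nonzero(2) base_pos(2) \<open>r + s < k\<close>] by blast
  have "\<bar>F r t * F s t\<bar> \<le> max C1 C2 * F 0 t" if "0 < t \<and> t < \<delta> \<or> 1 - \<delta> < t \<and> t < 1" for t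
  proof -
    have "F 0 t \<ge> 0" using pos[of t] that \<open>\<delta> \<le> 1 / 2\<close> by (auto simp: F_def)
    then have "C1 * F 0 t \<le> max C1 C2 * F 0 t" "C2 * F 0 t \<le> max C1 C2 * F 0 t"
      by (simp_all add: mult_right_mono)
    then show ?thesis
      using that C1[of t] C2[of "1 - t"] by (force simp: G_def abs_mult)
  qed
  then show ?thesis
    using \<open>\<delta> > 0\<close> \<open>\<delta> \<le> 1 / 2\<close> unfolding F_def by (intro exI conjI) auto
qed

lemma C0k_abs_product_le_const_mul:
  fixes \<phi> :: "real \<Rightarrow> real"
  assumes \<phi>: "\<phi> \<in> C0k k" and supp: "supp \<phi> \<subseteq> {0..1}"
    and pos: "\<And>t. t \<in> {0<..<1} \<Longrightarrow> \<phi> t > 0"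
    and zeros: "finite {t\<in>{0..1}. nderiv k \<phi> t = 0}" and "r + s < k"
  shows "\<exists>C. \<forall>t\<in>{0<..<1}. \<bar>nderiv r \<phi> t * nderiv s \<phi> t\<bar> \<le> C * \<phi> t"
proof -
  obtain \<delta> C12 where "0 < \<delta>" "\<delta> \<le> 1 / 2" and C12: "\<And>t. 0 < t \<and> t < \<delta> \<or> 1 - \<delta> < t \<and> t < 1 \<Longrightarrow>
      \<bar>nderiv r \<phi> t * nderiv s \<phi> t\<bar> \<le> C12 * \<phi> t"
    using C0k_abs_product_le_const_mul_near_ends[OF assms] by blast
  have "continuous_on {\<delta>..1 - \<delta>} (\<lambda>t. nderiv r \<phi> t * nderiv s \<phi> t)"
    using C0k_continuous_on[OF \<phi>] \<open>r + s < k\<close> by (intro continuous_intros) auto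
  moreover have "continuous_on {\<delta>..1 - \<delta>} \<phi>"
    using C0k_continuous_on[OF \<phi> le0] by simp
  moreover have "\<phi> t > 0" if "t \<in> {\<delta>..1 - \<delta>}" for t
    using pos[of t] that \<open>0 < \<delta>\<close> by simp
  ultimately obtain C3 where C3: "\<And>t. t \<in> {\<delta>..1 - \<delta>} \<Longrightarrow> \<bar>nderiv r \<phi> t * nderiv s \<phi> t\<bar> \<le> C3 * \<phi> t"
    using abs_le_const_mul_on_compact[OF compact_Icc] by blast
  have "\<bar>nderiv r \<phi> t * nderiv s \<phi> t\<bar> \<le> max C12 C3 * \<phi> t" if t: "t \<in> {0<..<1}" for t
  proof -
    have "C12 * \<phi> t \<le> max C12 C3 * \<phi> t" "C3 * \<phi> t \<le> max C12 C3 * \<phi> t"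
      using pos[OF t] by (simp_all add: mult_right_mono)
    moreover consider "0 < t \<and> t < \<delta> \<or> 1 - \<delta> < t \<and> t < 1" | "t \<in> {\<delta>..1 - \<delta>}"
      using t by force
    ultimately show ?thesis using C12[of t] C3[of t] by cases force+
  qed
  then show ?thesis by blast
qed

lemma real_of_ereal_one_div_bounds:
  fixes p :: ereal
  assumes "1 \<le> p"
  shows "0 \<le> real_of_ereal (1 / p)" "real_of_ereal (1 / p) \<le> 1"
proof -
  have "0 \<le> real_of_ereal (1 / p) \<and> real_of_ereal (1 / p) \<le> 1"
  proof (cases p)
    case (real q)
    then have "1 / p = ereal (1 / q)" "q \<ge> 1"
      using assms by (simp_all add: divide_ereal_def one_ereal_def inverse_eq_divide)
    then show ?thesis by simp
  qed (use assms in simp_all)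
  then show "0 \<le> real_of_ereal (1 / p)" "real_of_ereal (1 / p) \<le> 1" by simp_all
qed

theorem corollary4p6:
  fixes p :: ereal and m k :: nat and \<phi> :: "real \<Rightarrow> real"
  assumes "1 \<le> p"
    and "\<phi> \<in> C0k k"
    and "supp \<phi> \<subseteq> {0..1}"
    and "\<forall>t\<in>{0<..<1}. \<phi> t > 0"
    and "k > m + 1"
    and "finite {t\<in>{0..1}. nderiv k \<phi> t = 0}"
  shows "\<forall>r \<alpha>. r + \<alpha> \<le> m \<longrightarrow>
     Linf_on {0..1} (\<lambda>t. \<bar>nderiv r \<phi> t * nderiv \<alpha> \<phi> t\<bar> / \<bar>\<phi> t\<bar> powr real_of_ereal (1 / p))"
proof (intro allI impI)
  fix r \<alpha> assume "r + \<alpha> \<le> m"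
  then have "r + \<alpha> < k" using \<open>k > m + 1\<close> by simp
  then obtain C where C: "\<And>t. t \<in> {0<..<1} \<Longrightarrow> \<bar>nderiv r \<phi> t * nderiv \<alpha> \<phi> t\<bar> \<le> C * \<phi> t"
    using C0k_abs_product_le_const_mul[OF assms(2,3) _ assms(6)] assms(4) by blast
  have "\<phi> 0 = 0" "\<phi> 1 = 0"
    using C0k_nderiv_eq_0_at_ends[OF assms(2,3), of 0] by simp_all
  have "\<bar>nderiv r \<phi> t * nderiv \<alpha> \<phi> t\<bar> \<le> C * \<bar>\<phi> t\<bar>" if "t \<in> {0..1}" "\<phi> t \<noteq> 0" for t
  proof -
    have "t \<in> {0<..<1}" using that \<open>\<phi> 0 = 0\<close> \<open>\<phi> 1 = 0\<close> by (auto simp: less_le)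
    then show ?thesis using C[of t] assms(4) by (simp add: abs_of_pos)
  qed
  moreover have "continuous_on UNIV (\<lambda>t. nderiv r \<phi> t * nderiv \<alpha> \<phi> t)"
    using C0k_continuous_on[OF assms(2)] \<open>r + \<alpha> < k\<close> by (intro continuous_intros) auto
  moreover have "continuous_on UNIV \<phi>"
    using C0k_continuous_on[OF assms(2), of 0] by simp
  ultimately show "Linf_on {0..1} (\<lambda>t. \<bar>nderiv r \<phi> t * nderiv \<alpha> \<phi> t\<bar> / \<bar>\<phi> t\<bar> powr real_of_ereal (1 / p))"
    using real_of_ereal_one_div_bounds[OF assms(1)] by (intro Linf_on_abs_div_abs_powr) auto
qed

end
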